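(* Let $a<0$, $b>0$, $c\in(0,1)$, $d>0$, and set $\pi_0=bd(1-c)^a/(1+bd(1-c)^a)$. (i) If $Z\sim\mathrm{NB}(\pi_0,1/d)$ and $W_1,W_2,\dots$ are i.i.d. $\mathrm{NB}(c,-a)$ independent of $Z$, then $\sum_{i=1}^Z W_i\sim\mathrm{TDL}(a,b,c,d)$. (ii) If $Z\sim\mathrm{NB}(\pi_0,1/d)$ and, conditionally on $Z$, $X\sim\mathrm{NB}(c,-aZ)$ (point mass at $0$ when $Z=0$), then $X\sim\mathrm{TDL}(a,b,c,d)$. (iii) Let $G_1$ be Gamma with Laplace transform $(1+bd(1-c)^a t)^{-1/d}$; conditionally on $G_1$ let $N$ be Poisson with mean $G_1$; conditionally on $(G_1,N)$ let $G_2$ be Gamma with scale $c/(1-c)$ and shape $-aN$ (Laplace transform $(1+ct/(1-c))^{aN}$, point mass at $0$ if $N=0$); conditionally on $(G_1,N,G_2)$ let $X$ be Poisson with mean $G_2$. Then $X\sim\mathrm{TDL}(a,b,c,d)$.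
   Context: $\mathrm{NB}(\pi,\delta)$, $\pi\in(0,1)$, $\delta>0$: law on $\mathbb{N}$ with pgf $((1-\pi)/(1-\pi s))^\delta$. $\mathrm{TDL}(a,b,c,d)$: law on $\mathbb{N}$ with pgf $\big(1+\operatorname{sgn}(a)\,b\,d\,((1-cs)^a-(1-c)^a)\big)^{-1/d}$, $s\in[0,1]$, where $\operatorname{sgn}$ is the sign function (so $\operatorname{sgn}(a)=-1$ here). An empty sum equals $0$. *)

theory Defs
  imports "HOL-Probability.Probability"
begin

definition pgf :: "nat measure \<Rightarrow> real \<Rightarrow> real" where
  "pgf L s = (\<integral>k. s ^ k \<partial>L)"

definition law_with_pgf :: "nat measure \<Rightarrow> (real \<Rightarrow> real) \<Rightarrow> bool" where
  "law_with_pgf L G \<longleftrightarrow> prob_space L \<and> sets L = sets (count_space UNIV) \<and>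
     (\<forall>s\<in>{0..1}. pgf L s = G s)"

definition nb_pgf :: "real \<Rightarrow> real \<Rightarrow> real \<Rightarrow> real" where
  "nb_pgf p \<delta> s = ((1 - p) / (1 - p * s)) powr \<delta>"

definition tdl_pgf :: "real \<Rightarrow> real \<Rightarrow> real \<Rightarrow> real \<Rightarrow> real \<Rightarrow> real" where
  "tdl_pgf a b c d s =
     (1 + sgn a * b * d * ((1 - c * s) powr a - (1 - c) powr a)) powr (- 1 / d)"

definition is_NB :: "nat measure \<Rightarrow> real \<Rightarrow> real \<Rightarrow> bool" where
  "is_NB L p \<delta> \<longleftrightarrow> law_with_pgf L (nb_pgf p \<delta>)"

definition is_TDL :: "nat measure \<Rightarrow> real \<Rightarrow> real \<Rightarrow> real \<Rightarrow> real \<Rightarrow> bool" where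
  "is_TDL L a b c d \<longleftrightarrow> law_with_pgf L (tdl_pgf a b c d)"

text \<open>Poisson law with mean mu >= 0 (point mass at 0 when mu = 0).\<close>
definition poisson_law :: "real \<Rightarrow> nat measure" where
  "poisson_law \<mu> = density (count_space UNIV) (\<lambda>k. ennreal (\<mu> ^ k / fact k * exp (- \<mu>)))"

text \<open>Gamma law with shape k and scale theta (point mass at 0 when k = 0);
  its Laplace transform is (1 + theta t) powr (-k).\<close>
definition gamma_law :: "real \<Rightarrow> real \<Rightarrow> real measure" where
  "gamma_law k \<theta> = (if k = 0 then return borel 0 else
     density lborel (\<lambda>x. ennreal (if 0 < x then
        x powr (k - 1) * exp (- x / \<theta>) / (Gamma k * \<theta> powr k) else 0)))"

end

theory Submission
  imports Defs
begin

text \<open>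
  Each of the three laws is a compound law: conditionally on a count \<open>N\<close> the variable has
  generating function \<open>h(s)\<^sup>N\<close>, where \<open>h\<close> is the NB\<open>(c,-a)\<close> generating function, so its generating
  function is \<open>G(h(s))\<close> with \<open>G\<close> the generating function of \<open>N\<close>. In (i) this comes from
  independence, in (ii) it is the hypothesis, and in (iii) it holds because a Gamma-mixed Poisson
  law is negative binomial, which makes both the inner stage NB\<open>(c,-aN)\<close> and the count \<open>N\<close>
  NB\<open>(\<pi>\<^sub>0,1/d)\<close>. Substituting \<open>h\<close> into the NB\<open>(\<pi>\<^sub>0,1/d)\<close> generating function gives exactly
  the TDL generating function.
\<close>

section \<open>Probability generating functions\<close>

lemma nn_integral_power_eq_pgf:
  assumes L: "prob_space L" "sets L = sets (count_space UNIV)" and s: "0 \<le> s" "s \<le> 1"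
  shows "(\<integral>\<^sup>+k. ennreal (s ^ k) \<partial>L) = ennreal (pgf L s)"
proof -
  interpret prob_space L by (rule L(1))
  have "(\<lambda>k. s ^ k) \<in> borel_measurable L"
    by (subst measurable_cong_sets[OF L(2) refl]) simp
  have "integrable L (\<lambda>k. s ^ k)"
    by (rule integrable_const_bound[where B=1])
      (use s \<open>(\<lambda>k. s ^ k) \<in> borel_measurable L\<close> in \<open>auto simp: power_le_one\<close>)
  then show ?thesis
    unfolding pgf_def using s by (intro nn_integral_eq_integral) auto
qed

lemma pgf_nonneg: "0 \<le> s \<Longrightarrow> 0 \<le> pgf L s"
  by (simp add: pgf_def)

lemma law_with_pgfD:
  assumes "law_with_pgf L G" "0 \<le> s" "s \<le> 1"
  shows "(\<integral>\<^sup>+k. ennreal (s ^ k) \<partial>L) = ennreal (G s)"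
  using assms nn_integral_power_eq_pgf[of L s] unfolding law_with_pgf_def by auto

lemma law_with_pgfI:
  assumes "prob_space L" "sets L = sets (count_space UNIV)"
    and "\<And>s. 0 \<le> s \<Longrightarrow> s \<le> 1 \<Longrightarrow> 0 \<le> G s \<and> (\<integral>\<^sup>+k. ennreal (s ^ k) \<partial>L) = ennreal (G s)"
  shows "law_with_pgf L G"
  unfolding law_with_pgf_def
proof (intro conjI ballI assms(1,2))
  fix s :: real assume "s \<in> {0..1}"
  then have "ennreal (pgf L s) = ennreal (G s)" "0 \<le> G s"
    using assms nn_integral_power_eq_pgf[of L s] by auto
  moreover have "0 \<le> pgf L s"
    using \<open>s \<in> {0..1}\<close> by (simp add: pgf_nonneg)
  ultimately show "pgf L s = G s" by simp
qed

lemma law_with_pgf_cong: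
  "(\<And>s. 0 \<le> s \<Longrightarrow> s \<le> 1 \<Longrightarrow> G s = G' s) \<Longrightarrow> law_with_pgf L G \<longleftrightarrow> law_with_pgf L G'"
  unfolding law_with_pgf_def by auto

lemma law_with_pgf_nonneg:
  assumes "law_with_pgf L G" "0 \<le> s" "s \<le> 1"
  shows "0 \<le> G s"
  using assms pgf_nonneg[of s L] unfolding law_with_pgf_def by auto

lemma law_with_pgf_comp:
  assumes L: "law_with_pgf L G"
    and X: "prob_space X" "sets X = sets (count_space UNIV)"
    and h: "\<And>s. 0 \<le> s \<Longrightarrow> s \<le> 1 \<Longrightarrow> 0 \<le> h s \<and> h s \<le> 1"
    and XL: "\<And>s. 0 \<le> s \<Longrightarrow> s \<le> 1 \<Longrightarrow>
               (\<integral>\<^sup>+k. ennreal (s ^ k) \<partial>X) = (\<integral>\<^sup>+k. ennreal (h s ^ k) \<partial>L)"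
  shows "law_with_pgf X (G \<circ> h)"
  using X by (rule law_with_pgfI)
    (use h XL law_with_pgfD[OF L] law_with_pgf_nonneg[OF L] in simp)

lemma law_with_pgf_bind:
  assumes L: "law_with_pgf L G"
    and Q: "\<And>n. law_with_pgf (Q n) (\<lambda>s. h s ^ n)"
    and h: "\<And>s. 0 \<le> s \<Longrightarrow> s \<le> 1 \<Longrightarrow> 0 \<le> h s \<and> h s \<le> 1"
  shows "law_with_pgf (L \<bind> Q) (G \<circ> h)"
proof -
  have L_sets: "sets L = sets (count_space UNIV)" and "prob_space L"
    using L by (auto simp: law_with_pgf_def)
  have Q_sets: "sets (Q n) = sets (count_space UNIV)" and "prob_space (Q n)" for n
    using Q by (auto simp: law_with_pgf_def)
  have Q_kernel: "Q \<in> L \<rightarrow>\<^sub>M subprob_algebra (count_space UNIV)"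
    using Q_sets \<open>\<And>n. prob_space (Q n)\<close>
    by (auto simp: measurable_cong_sets[OF L_sets refl] space_subprob_algebra
        prob_space_imp_subprob_space)
  show ?thesis
  proof (rule law_with_pgf_comp[OF L _ _ h])
    show "prob_space (L \<bind> Q)"
      using \<open>prob_space L\<close> \<open>\<And>n. prob_space (Q n)\<close> Q_kernel
      by (intro prob_space.prob_space_bind) auto
    show "sets (L \<bind> Q) = sets (count_space UNIV)"
      using Q_sets \<open>prob_space L\<close> by (intro sets_bind) (auto simp: prob_space.not_empty)
  next
    fix s :: real assume s: "0 \<le> s" "s \<le> 1"
    then show "(\<integral>\<^sup>+k. ennreal (s ^ k) \<partial>(L \<bind> Q)) = (\<integral>\<^sup>+n. ennreal (h s ^ n) \<partial>L)"
      by (simp add: nn_integral_bind[OF _ Q_kernel] law_with_pgfD[OF Q])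
  qed
qed

section \<open>Negative binomial and TDL generating functions\<close>

lemma nb_pgf_bounds:
  assumes "0 \<le> p" "p < 1" "0 \<le> \<delta>" "0 \<le> s" "s \<le> 1"
  shows "0 \<le> nb_pgf p \<delta> s \<and> nb_pgf p \<delta> s \<le> 1"
proof -
  have "p * s \<le> p" using assms by (simp add: mult_left_le)
  then have "0 < (1 - p) / (1 - p * s)" "(1 - p) / (1 - p * s) \<le> 1"
    using assms by auto
  then show ?thesis
    using assms powr_mono2[of \<delta> "(1 - p) / (1 - p * s)" 1] by (simp add: nb_pgf_def)
qed

lemma nb_pgf_mult_shape:
  assumes "0 \<le> p" "p < 1" "0 \<le> s" "s \<le> 1"
  shows "nb_pgf p (\<delta> * real n) s = nb_pgf p \<delta> s ^ n"
proof -
  have "p * s \<le> p" using assms by (simp add: mult_left_le)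
  then have "0 < ((1 - p) / (1 - p * s)) powr \<delta>" using assms by simp
  then show ?thesis by (simp add: nb_pgf_def powr_powr[symmetric] powr_realpow)
qed

lemma is_TDL_iff_nb_compound:
  fixes a b c d :: real
  assumes ha: "a < 0" and hb: "b > 0" and hc: "0 < c" "c < 1" and hd: "d > 0"
  shows "law_with_pgf L (nb_pgf (b * d * (1 - c) powr a / (1 + b * d * (1 - c) powr a)) (1 / d)
                          \<circ> nb_pgf c (- a))
         \<longleftrightarrow> is_TDL L a b c d"
  unfolding is_TDL_def
proof (rule law_with_pgf_cong)
  fix s :: real assume s: "0 \<le> s" "s \<le> 1"
  define B where "B = b * d * (1 - c) powr a"
  define h where "h = nb_pgf c (- a) s"
  have "B > 0" using hb hd hc by (simp add: B_def)
  have "1 - c * s \<ge> 1 - c" using hc s by (simp add: mult_left_le)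
  then have "h = (1 - c) powr (- a) / (1 - c * s) powr (- a)"
    using hc by (simp add: h_def nb_pgf_def powr_divide)
  then have h_eq: "h = (1 - c * s) powr a / (1 - c) powr a"
    by (simp add: powr_minus divide_inverse)
  have "h \<le> 1" using nb_pgf_bounds[of c "- a" s] hc ha s by (simp add: h_def)
  then have pos: "1 + B - B * h > 0"
    using \<open>B > 0\<close> by (smt (verit) mult_left_le)
  then have "(1 - B / (1 + B)) / (1 - B / (1 + B) * h) = 1 / (1 + B - B * h)"
    using \<open>B > 0\<close> by (simp add: field_simps)
  then have "nb_pgf (B / (1 + B)) (1 / d) h = (1 + B - B * h) powr (- 1 / d)"
    unfolding nb_pgf_def using pos by (simp add: powr_minus divide_inverse inverse_powr)
  also have "1 + B - B * h = 1 + sgn a * b * d * ((1 - c * s) powr a - (1 - c) powr a)"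
    using ha hc by (simp add: h_eq B_def field_simps)
  finally show "(nb_pgf (B / (1 + B)) (1 / d) \<circ> nb_pgf c (- a)) s = tdl_pgf a b c d s"
    by (simp add: h_def tdl_pgf_def)
qed

lemma nb_mixture_is_TDL:
  fixes a b c d :: real
  assumes ha: "a < 0" and hb: "b > 0" and hc: "0 < c" "c < 1" and hd: "d > 0"
    and Z: "is_NB (measure_pmf pZ) (b * d * (1 - c) powr a / (1 + b * d * (1 - c) powr a)) (1 / d)"
    and K0: "K 0 = return_pmf 0"
    and K: "\<And>z. z > 0 \<Longrightarrow> is_NB (measure_pmf (K z)) c (- a * real z)"
  shows "is_TDL (measure_pmf (bind_pmf pZ K)) a b c d"
proof -
  have "law_with_pgf (measure_pmf (K z)) (\<lambda>s. nb_pgf c (- a) s ^ z)" for z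
  proof (cases "z = 0")
    case True
    show ?thesis
      by (rule law_with_pgfI) (auto simp: True K0 measure_pmf.prob_space_axioms)
  next
    case False
    then show ?thesis
      using K[of z] hc nb_pgf_mult_shape[of c _ "- a" z]
      by (subst law_with_pgf_cong[where G'="nb_pgf c (- a * real z)"]) (auto simp: is_NB_def)
  qed
  then have "law_with_pgf (measure_pmf pZ \<bind> (\<lambda>z. measure_pmf (K z)))
      (nb_pgf (b * d * (1 - c) powr a / (1 + b * d * (1 - c) powr a)) (1 / d) \<circ> nb_pgf c (- a))"
    using Z ha hc by (intro law_with_pgf_bind) (auto simp: is_NB_def nb_pgf_bounds)
  then show ?thesis
    using is_TDL_iff_nb_compound[OF ha hb hc hd] by (simp add: measure_pmf_bind)
qed

section \<open>Random sums\<close>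

lemma measurable_count_space_nat_iff_borel:
  "(f :: 'a \<Rightarrow> nat) \<in> M \<rightarrow>\<^sub>M count_space UNIV \<longleftrightarrow> f \<in> borel_measurable M"
  by (simp add: measurable_cong_sets[OF refl, of "count_space UNIV" borel] sets_borel_eq_count_space)

lemma measurable_sum_nat:
  assumes "\<And>i. i \<in> A \<Longrightarrow> W i \<in> M \<rightarrow>\<^sub>M count_space (UNIV :: nat set)"
  shows "(\<lambda>\<omega>. \<Sum>i\<in>A. W i \<omega>) \<in> M \<rightarrow>\<^sub>M count_space UNIV"
  using assms unfolding measurable_count_space_nat_iff_borel by (intro borel_measurable_sum) auto

lemma nn_integral_split_nat_valued:
  assumes Z: "Z \<in> M \<rightarrow>\<^sub>M count_space (UNIV :: nat set)"
    and g: "\<And>n. g n \<in> borel_measurable M"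
  shows "(\<integral>\<^sup>+\<omega>. g (Z \<omega>) \<omega> \<partial>M) = (\<Sum>n. \<integral>\<^sup>+\<omega>. indicator {n} (Z \<omega>) * g n \<omega> \<partial>M)"
proof -
  have "g (Z \<omega>) \<omega> = (\<Sum>n. indicator {n} (Z \<omega>) * g n \<omega>)" for \<omega>
    using suminf_finite[of "{Z \<omega>}" "\<lambda>n. indicator {n} (Z \<omega>) * g n \<omega>"] by simp
  then have "(\<integral>\<^sup>+\<omega>. g (Z \<omega>) \<omega> \<partial>M) = (\<integral>\<^sup>+\<omega>. (\<Sum>n. indicator {n} (Z \<omega>) * g n \<omega>) \<partial>M)"
    by simp
  also have "\<dots> = (\<Sum>n. \<integral>\<^sup>+\<omega>. indicator {n} (Z \<omega>) * g n \<omega> \<partial>M)"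
    using Z g by (intro nn_integral_suminf)
      (measurable, simp add: measurable_count_space_nat_iff_borel)
  finally show ?thesis .
qed

context prob_space
begin

lemma nn_integral_indicator_times_power_sum:
  fixes Z :: "'a \<Rightarrow> nat" and W :: "nat \<Rightarrow> 'a \<Rightarrow> nat"
  assumes indep: "indep_vars (\<lambda>_. count_space UNIV) (\<lambda>i. case i of None \<Rightarrow> Z | Some j \<Rightarrow> W j)
      (insert None (Some ` {1..}))"
    and s: "0 \<le> s"
    and W: "\<And>j. j \<ge> 1 \<Longrightarrow> (\<integral>\<^sup>+\<omega>. ennreal (s ^ W j \<omega>) \<partial>M) = ennreal h"
  shows "(\<integral>\<^sup>+\<omega>. indicator {n} (Z \<omega>) * ennreal (s ^ (\<Sum>i = 1..n. W i \<omega>)) \<partial>M)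
    = (\<integral>\<^sup>+\<omega>. indicator {n} (Z \<omega>) \<partial>M) * ennreal h ^ n"
proof -
  define X where "X = (\<lambda>i. case i of None \<Rightarrow> Z | Some j \<Rightarrow> W j)"
  define J where "J = insert None (Some ` {1..n})"
  define G where "G i k = (case i of None \<Rightarrow> indicator {n} k | Some j \<Rightarrow> ennreal (s ^ k))"
    for i :: "nat option" and k :: nat
  have prod_J: "(\<Prod>i\<in>J. F i) = F None * (\<Prod>j = 1..n. F (Some j))" for F :: "nat option \<Rightarrow> ennreal"
    unfolding J_def by (subst prod.insert) (auto simp: prod.reindex)
  have "J \<subseteq> insert None (Some ` {1..})" by (auto simp: J_def)
  then have "indep_vars (\<lambda>_. count_space UNIV) X J"
    using indep_vars_subset[OF indep] by (simp add: X_def)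
  then have "indep_vars (\<lambda>_. borel) (\<lambda>i \<omega>. G i (X i \<omega>)) J"
    by (rule indep_vars_compose2) simp
  then have "(\<integral>\<^sup>+\<omega>. (\<Prod>i\<in>J. G i (X i \<omega>)) \<partial>M) = (\<Prod>i\<in>J. \<integral>\<^sup>+\<omega>. G i (X i \<omega>) \<partial>M)"
    by (intro indep_vars_nn_integral) (auto simp: J_def)
  moreover have "(\<Prod>i\<in>J. G i (X i \<omega>)) = indicator {n} (Z \<omega>) * ennreal (s ^ (\<Sum>i = 1..n. W i \<omega>))"
    for \<omega>
    using s by (simp add: prod_J G_def X_def prod_ennreal power_sum)
  ultimately show ?thesis
    using W by (simp add: prod_J G_def X_def)
qed

lemma nn_integral_power_random_sum:
  fixes Z :: "'a \<Rightarrow> nat" and W :: "nat \<Rightarrow> 'a \<Rightarrow> nat"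
  assumes indep: "indep_vars (\<lambda>_. count_space UNIV) (\<lambda>i. case i of None \<Rightarrow> Z | Some j \<Rightarrow> W j)
      (insert None (Some ` {1..}))"
    and s: "0 \<le> s" and h: "0 \<le> h"
    and W: "\<And>j. j \<ge> 1 \<Longrightarrow> (\<integral>\<^sup>+\<omega>. ennreal (s ^ W j \<omega>) \<partial>M) = ennreal h"
  shows "(\<integral>\<^sup>+\<omega>. ennreal (s ^ (\<Sum>i = 1..Z \<omega>. W i \<omega>)) \<partial>M) = (\<integral>\<^sup>+\<omega>. ennreal (h ^ Z \<omega>) \<partial>M)"
proof -
  have Z: "Z \<in> borel_measurable M" and W_meas: "\<And>j. j \<ge> 1 \<Longrightarrow> W j \<in> M \<rightarrow>\<^sub>M count_space UNIV"
    using indep by (auto simp: indep_vars_def measurable_count_space_nat_iff_borel[symmetric])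
  have sum_meas: "(\<lambda>\<omega>. \<Sum>i = 1..n. W i \<omega>) \<in> M \<rightarrow>\<^sub>M count_space UNIV" for n
    using W_meas by (intro measurable_sum_nat) auto
  have "(\<integral>\<^sup>+\<omega>. ennreal (s ^ (\<Sum>i = 1..Z \<omega>. W i \<omega>)) \<partial>M)
      = (\<Sum>n. \<integral>\<^sup>+\<omega>. indicator {n} (Z \<omega>) * ennreal (s ^ (\<Sum>i = 1..n. W i \<omega>)) \<partial>M)"
    using Z by (intro nn_integral_split_nat_valued measurable_compose[OF sum_meas])
      (auto simp: measurable_count_space_nat_iff_borel)
  also have "\<dots> = (\<Sum>n. \<integral>\<^sup>+\<omega>. indicator {n} (Z \<omega>) * ennreal (h ^ n) \<partial>M)"
    using Z h nn_integral_indicator_times_power_sum[OF indep s W]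
    by (simp add: nn_integral_multc ennreal_power)
  also have "\<dots> = (\<integral>\<^sup>+\<omega>. ennreal (h ^ Z \<omega>) \<partial>M)"
    using Z by (intro nn_integral_split_nat_valued[symmetric]) (auto simp: measurable_count_space_nat_iff_borel)
  finally show ?thesis .
qed

end

lemma random_sum_is_TDL:
  fixes a b c d :: real and Z :: "'a \<Rightarrow> nat" and W :: "nat \<Rightarrow> 'a \<Rightarrow> nat"
  assumes ha: "a < 0" and hb: "b > 0" and hc: "0 < c" "c < 1" and hd: "d > 0"
    and M: "prob_space M"
    and indep: "prob_space.indep_vars M (\<lambda>_. count_space UNIV)
      (\<lambda>i. case i of None \<Rightarrow> Z | Some j \<Rightarrow> W j) (insert None (Some ` {1..}))"
    and Z: "is_NB (distr M (count_space UNIV) Z) (b * d * (1 - c) powr a / (1 + b * d * (1 - c) powr a)) (1 / d)"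
    and W: "\<And>j. j \<ge> 1 \<Longrightarrow> is_NB (distr M (count_space UNIV) (W j)) c (- a)"
  shows "is_TDL (distr M (count_space UNIV) (\<lambda>\<omega>. \<Sum>i = 1..Z \<omega>. W i \<omega>)) a b c d"
proof -
  interpret prob_space M by (rule M)
  have Z_meas: "Z \<in> M \<rightarrow>\<^sub>M count_space UNIV"
    and W_meas: "\<And>j. j \<ge> 1 \<Longrightarrow> W j \<in> M \<rightarrow>\<^sub>M count_space UNIV"
    using indep by (auto simp: indep_vars_def)
  have S_meas: "(\<lambda>\<omega>. \<Sum>i = 1..Z \<omega>. W i \<omega>) \<in> M \<rightarrow>\<^sub>M count_space UNIV"
  proof (rule measurable_compose_countable'[OF _ Z_meas])
    show "(\<lambda>\<omega>. \<Sum>i = 1..n. W i \<omega>) \<in> M \<rightarrow>\<^sub>M count_space UNIV" for n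
      using W_meas by (intro measurable_sum_nat) simp
  qed simp
  have h: "0 \<le> nb_pgf c (- a) s \<and> nb_pgf c (- a) s \<le> 1" if "0 \<le> s" "s \<le> 1" for s
    using that ha hc by (intro nb_pgf_bounds) auto
  have "law_with_pgf (distr M (count_space UNIV) (\<lambda>\<omega>. \<Sum>i = 1..Z \<omega>. W i \<omega>))
      (nb_pgf (b * d * (1 - c) powr a / (1 + b * d * (1 - c) powr a)) (1 / d) \<circ> nb_pgf c (- a))"
  proof (rule law_with_pgf_comp[OF Z[unfolded is_NB_def] prob_space_distr[OF S_meas] _ h])
    fix s :: real assume s: "0 \<le> s" "s \<le> 1"
    have "(\<integral>\<^sup>+\<omega>. ennreal (s ^ W j \<omega>) \<partial>M) = ennreal (nb_pgf c (- a) s)" if "j \<ge> 1" for j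
      using law_with_pgfD[OF W[OF that, unfolded is_NB_def] s]
      by (subst (asm) nn_integral_distr[OF W_meas[OF that]]) auto
    then have "(\<integral>\<^sup>+\<omega>. ennreal (s ^ (\<Sum>i = 1..Z \<omega>. W i \<omega>)) \<partial>M)
        = (\<integral>\<^sup>+\<omega>. ennreal (nb_pgf c (- a) s ^ Z \<omega>) \<partial>M)"
      using s h[OF s] by (intro nn_integral_power_random_sum[OF indep]) auto
    then show "(\<integral>\<^sup>+k. ennreal (s ^ k) \<partial>distr M (count_space UNIV) (\<lambda>\<omega>. \<Sum>i = 1..Z \<omega>. W i \<omega>))
        = (\<integral>\<^sup>+k. ennreal (nb_pgf c (- a) s ^ k) \<partial>distr M (count_space UNIV) Z)"
      by (subst nn_integral_distr[OF S_meas]) (simp_all add: nn_integral_distr[OF Z_meas])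
  qed simp
  then show ?thesis
    using is_TDL_iff_nb_compound[OF ha hb hc hd] by simp
qed

section \<open>Poisson and Gamma laws\<close>

lemma sets_poisson_law [simp]: "sets (poisson_law \<mu>) = sets (count_space UNIV)"
  by (simp add: poisson_law_def)

lemma space_poisson_law [simp]: "space (poisson_law \<mu>) = UNIV"
  by (simp add: poisson_law_def)

lemma nn_integral_poisson_law:
  "(\<integral>\<^sup>+k. f k \<partial>poisson_law \<mu>) = (\<Sum>k. ennreal (\<mu> ^ k / fact k * exp (- \<mu>)) * f k)"
  unfolding poisson_law_def
  by (subst nn_integral_density) (auto simp: nn_integral_count_space_nat)

lemma emeasure_poisson_law_0: "emeasure (poisson_law \<mu>) {0} = ennreal (exp (- \<mu>))"
  unfolding poisson_law_def
  by (subst emeasure_density) (auto simp: nn_integral_count_space_indicator[symmetric])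

lemma nn_integral_power_poisson_law:
  assumes "0 \<le> \<mu>" "0 \<le> u"
  shows "(\<integral>\<^sup>+k. ennreal (u ^ k) \<partial>poisson_law \<mu>) = ennreal (exp (\<mu> * (u - 1)))"
proof -
  have sums: "(\<lambda>k. (\<mu> * u) ^ k / fact k * exp (- \<mu>)) sums (exp (\<mu> * u) * exp (- \<mu>))"
    using sums_mult2[OF exp_converges[of "\<mu> * u"], of "exp (- \<mu>)"]
    by (simp add: divide_inverse mult.commute)
  have "(\<integral>\<^sup>+k. ennreal (u ^ k) \<partial>poisson_law \<mu>) = (\<Sum>k. ennreal ((\<mu> * u) ^ k / fact k * exp (- \<mu>)))"
    unfolding nn_integral_poisson_law using assms
    by (intro suminf_cong) (auto simp: ennreal_mult'[symmetric] power_mult_distrib)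
  also have "\<dots> = ennreal (exp (\<mu> * u) * exp (- \<mu>))"
    using assms sums by (subst suminf_ennreal2) (auto simp: sums_iff)
  also have "exp (\<mu> * u) * exp (- \<mu>) = exp (\<mu> * (u - 1))"
    by (simp add: mult_exp_exp algebra_simps)
  finally show ?thesis .
qed

lemma prob_space_poisson_law: "0 \<le> \<mu> \<Longrightarrow> prob_space (poisson_law \<mu>)"
  using nn_integral_power_poisson_law[of \<mu> 1]
  by (intro prob_spaceI) (simp add: nn_integral_const)

lemma measurable_poisson_law_max:
  "(\<lambda>x. poisson_law (max x 0)) \<in> borel \<rightarrow>\<^sub>M subprob_algebra (count_space UNIV)"
proof (rule measurable_subprob_algebra)
  fix A :: "nat set"
  have "(\<lambda>x. emeasure (poisson_law (max x 0)) A) =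
      (\<lambda>x. \<Sum>k. ennreal (max x 0 ^ k / fact k * exp (- max x 0)) * indicator A k)"
    by (simp add: nn_integral_poisson_law flip: nn_integral_indicator)
  also have "\<dots> \<in> borel_measurable borel" by measurable
  finally show "(\<lambda>x. emeasure (poisson_law (max x 0)) A) \<in> borel_measurable borel" .
qed (simp_all add: prob_space_imp_subprob_space prob_space_poisson_law)

lemma sets_gamma_law [simp]: "sets (gamma_law k \<theta>) = sets borel"
  by (simp add: gamma_law_def)

lemma space_gamma_law [simp]: "space (gamma_law k \<theta>) = UNIV"
  by (simp add: gamma_law_def)

lemma AE_gamma_law_nonneg: "AE x in gamma_law k \<theta>. 0 \<le> x"
  unfolding gamma_law_def by (auto simp: AE_density AE_return)

lemma nn_integral_Gamma_scaled:
  assumes k: "0 < k" and l: "0 < l"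
  shows "(\<integral>\<^sup>+x. ennreal (indicator {0..} x * x powr (k - 1) * exp (- l * x)) \<partial>lborel)
    = ennreal (Gamma k / l powr k)"
proof -
  have "(\<integral>\<^sup>+x. ennreal (indicator {0..} x * x powr (k - 1) * exp (- l * x)) \<partial>lborel)
      = ennreal (1 / l) * (\<integral>\<^sup>+y. ennreal (indicator {0..} (y / l) * (y / l) powr (k - 1) * exp (- y)) \<partial>lborel)"
    using l by (subst nn_integral_real_affine[where c="1 / l" and t=0]) auto
  also have "(\<lambda>y. ennreal (indicator {0..} (y / l) * (y / l) powr (k - 1) * exp (- y)))
      = (\<lambda>y. ennreal (l powr (1 - k)) * ennreal (indicator {0..} y * y powr (k - 1) / exp y))"
  proof
    fix y :: real
    have "indicator {0..} (y / l) = (indicator {0..} y :: real)"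
      using l by (simp add: indicator_def zero_le_divide_iff)
    moreover have "l powr (1 - k) = inverse (l powr (k - 1))"
      using powr_minus[of l "k - 1"] by simp
    then have "(y / l) powr (k - 1) = l powr (1 - k) * y powr (k - 1)" if "0 \<le> y"
      using that l powr_divide[of y l "k - 1"] by (simp add: divide_inverse mult.commute)
    ultimately show "ennreal (indicator {0..} (y / l) * (y / l) powr (k - 1) * exp (- y))
        = ennreal (l powr (1 - k)) * ennreal (indicator {0..} y * y powr (k - 1) / exp y)"
      by (cases "0 \<le> y") (auto simp: ennreal_mult'[symmetric] exp_minus field_simps)
  qed
  also have "(\<integral>\<^sup>+y. ennreal (l powr (1 - k)) * ennreal (indicator {0..} y * y powr (k - 1) / exp y) \<partial>lborel)
      = ennreal (l powr (1 - k)) * ennreal (Gamma k)"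
    by (subst nn_integral_cmult) (auto simp: Gamma_conv_nn_integral_real[OF k])
  also have "ennreal (1 / l) * (ennreal (l powr (1 - k)) * ennreal (Gamma k)) = ennreal (Gamma k / l powr k)"
    using l k by (simp add: ennreal_mult'[symmetric] powr_diff Gamma_real_pos less_imp_le)
  finally show ?thesis .
qed

lemma nn_integral_exp_gamma_law:
  assumes k: "0 \<le> k" and \<theta>: "0 < \<theta>" and t: "0 \<le> t"
  shows "(\<integral>\<^sup>+x. ennreal (exp (- t * x)) \<partial>gamma_law k \<theta>) = ennreal ((1 + \<theta> * t) powr (- k))"
proof (cases "k = 0")
  case True
  moreover have "0 \<le> \<theta> * t" using \<theta> t by simp
  ultimately show ?thesis by (simp add: gamma_law_def nn_integral_return)
next
  case False
  then have "0 < k" using k by simp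
  define l where "l = 1 / \<theta> + t"
  define C where "C = Gamma k * \<theta> powr k"
  have "0 < l" using \<theta> t by (simp add: l_def add_pos_nonneg)
  have "0 < C" using \<open>0 < k\<close> \<theta> by (simp add: C_def Gamma_real_pos)
  have "(\<integral>\<^sup>+x. ennreal (exp (- t * x)) \<partial>gamma_law k \<theta>)
      = (\<integral>\<^sup>+x. ennreal (1 / C) * ennreal (indicator {0..} x * x powr (k - 1) * exp (- l * x)) \<partial>lborel)"
    unfolding gamma_law_def using False \<open>0 < C\<close>
    by (auto simp: nn_integral_density ennreal_mult'[symmetric] C_def l_def mult_exp_exp
        algebra_simps indicator_def intro!: nn_integral_cong)
  also have "\<dots> = ennreal (1 / C * (Gamma k / l powr k))"
    using \<open>0 < k\<close> \<open>0 < C\<close>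
    by (subst nn_integral_cmult, simp, subst nn_integral_Gamma_scaled[OF \<open>0 < k\<close> \<open>0 < l\<close>])
      (simp add: ennreal_mult'[symmetric])
  also have "1 / C * (Gamma k / l powr k) = (1 + \<theta> * t) powr (- k)"
  proof -
    have "1 + \<theta> * t = \<theta> * l" using \<theta> by (simp add: l_def field_simps)
    then show ?thesis
      using \<theta> \<open>0 < l\<close> \<open>0 < k\<close>
      by (simp add: C_def powr_mult powr_minus Gamma_real_pos[THEN less_imp_neq, symmetric] field_simps)
  qed
  finally show ?thesis .
qed

lemma prob_space_gamma_law:
  assumes "0 \<le> k" "0 < \<theta>" shows "prob_space (gamma_law k \<theta>)"
  using nn_integral_exp_gamma_law[OF assms, of 0]
  by (intro prob_spaceI) (simp add: nn_integral_const)

section \<open>Gamma-mixed Poisson laws\<close>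

text \<open>Unlike \<open>bind_cong_AE\<close>, the kernel \<open>f\<close> need not be measurable: since it leaves
  the subprobability measures outside \<open>S\<close>, its preimages differ from those of \<open>f'\<close> only by a null set.\<close>

lemma bind_cong_AE_outside_subprob:
  assumes f': "f' \<in> M \<rightarrow>\<^sub>M subprob_algebra N"
    and S: "S \<in> sets M" "AE x in M. x \<in> S"
    and eq: "\<And>x. x \<in> S \<Longrightarrow> f x = f' x"
    and outside: "\<And>x. x \<in> space M \<Longrightarrow> x \<notin> S \<Longrightarrow> f x \<notin> space (subprob_algebra N)"
    and sets_f: "\<And>x. x \<in> space M \<Longrightarrow> sets (f x) = sets N"
    and M: "space M \<noteq> {}"
  shows "M \<bind> f = M \<bind> f'"
proof -
  have "S \<subseteq> space M" using S(1) sets.sets_into_space by blast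
  have "distr M (subprob_algebra N) f = distr M (subprob_algebra N) f'"
    unfolding distr_def
  proof (rule measure_of_eq)
    fix A assume "A \<in> sigma_sets (space (subprob_algebra N)) (sets (subprob_algebra N))"
    then have A: "A \<in> sets (subprob_algebra N)" by (simp add: sets.sigma_sets_eq)
    then have "A \<subseteq> space (subprob_algebra N)" using sets.sets_into_space by blast
    then have preimage: "f -` A \<inter> space M = f' -` A \<inter> S"
      using eq outside \<open>S \<subseteq> space M\<close> by (auto, metis subsetD)
    have "f' -` A \<inter> S = (f' -` A \<inter> space M) \<inter> S" using \<open>S \<subseteq> space M\<close> by auto
    then have "f' -` A \<inter> S \<in> sets M" using measurable_sets[OF f' A] S(1) by auto
    then show "emeasure M (f -` A \<inter> space M) = emeasure M (f' -` A \<inter> space M)"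
      unfolding preimage using S(2) measurable_sets[OF f' A] by (intro emeasure_eq_AE) auto
  qed (use sets.sets_into_space in blast)
  moreover have "(SOME x. x \<in> space M) \<in> space M"
    using M by (simp add: some_in_eq)
  then have "subprob_algebra (f (SOME x. x \<in> space M)) = subprob_algebra N"
    by (intro subprob_algebra_cong sets_f)
  ultimately show ?thesis
    using bind_nonempty[OF M, of f] bind_nonempty''[OF f' M] by simp
qed

lemma bind_poisson_law_not_subprob:
  assumes "\<mu> < 0" and Q: "\<And>n. prob_space (Q n)" "\<And>n. sets (Q n) = sets N"
  shows "poisson_law \<mu> \<bind> Q \<notin> space (subprob_algebra N)"
proof
  assume subprob: "poisson_law \<mu> \<bind> Q \<in> space (subprob_algebra N)"
  have "Q \<in> count_space UNIV \<rightarrow>\<^sub>M subprob_algebra N"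
    using Q by (auto simp: space_subprob_algebra prob_space_imp_subprob_space)
  then have Q_kernel: "Q \<in> poisson_law \<mu> \<rightarrow>\<^sub>M subprob_algebra N"
    by (subst measurable_cong_sets[OF sets_poisson_law refl])
  have Q_space: "emeasure (Q n) (space N) = 1" for n
    using prob_space.emeasure_space_1[OF Q(1)] sets_eq_imp_space_eq[OF Q(2)] by metis
  have "ennreal (exp (- \<mu>)) = emeasure (poisson_law \<mu>) {0}"
    by (simp add: emeasure_poisson_law_0)
  also have "\<dots> \<le> emeasure (poisson_law \<mu>) UNIV"
    by (intro emeasure_mono) auto
  also have "\<dots> = emeasure (poisson_law \<mu> \<bind> Q) (space N)"
    by (simp add: emeasure_bind[OF _ Q_kernel] Q_space)
  also have "\<dots> \<le> 1"
    using subprob by (auto simp: space_subprob_algebra dest: subprob_space.subprob_emeasure_le_1)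
  finally have "exp (- \<mu>) \<le> 1" by simp
  then show False using \<open>\<mu> < 0\<close> by simp
qed

text \<open>For \<open>x < 0\<close> the measure \<open>poisson_law x\<close> has mass larger than 1, so \<open>poisson_law\<close> is not a
  measurable kernel on the reals and the monad laws do not apply to it directly; on laws carried
  by \<open>[0,\<infinity>)\<close> it can be replaced by its truncation at 0.\<close>

lemma bind_poisson_law_max:
  fixes M :: "real measure" and Q :: "nat \<Rightarrow> 'b measure"
  assumes M: "sets M = sets borel" "AE x in M. 0 \<le> x"
    and Q: "\<And>n. prob_space (Q n)" "\<And>n. sets (Q n) = sets N"
  shows "M \<bind> (\<lambda>x. poisson_law x \<bind> Q) = M \<bind> (\<lambda>x. poisson_law (max x 0) \<bind> Q)"
proof (rule bind_cong_AE_outside_subprob[where S="{0..}" and N=N])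
  have "Q \<in> count_space UNIV \<rightarrow>\<^sub>M subprob_algebra N"
    using Q by (auto simp: space_subprob_algebra prob_space_imp_subprob_space)
  then show "(\<lambda>x. poisson_law (max x 0) \<bind> Q) \<in> M \<rightarrow>\<^sub>M subprob_algebra N"
    using measurable_bind2[OF measurable_poisson_law_max] by (simp add: measurable_cong_sets[OF M(1) refl])
  show "sets (poisson_law x \<bind> Q) = sets N" for x
    using Q(2) by (intro sets_bind) auto
  show "poisson_law x \<bind> Q \<notin> space (subprob_algebra N)" if "x \<notin> {0..}" for x
    using that Q by (intro bind_poisson_law_not_subprob) auto
qed (use M sets_eq_imp_space_eq[OF M(1)] in auto)

lemma bind_poisson_law_eq_max:
  fixes M :: "real measure"
  assumes "sets M = sets borel" "AE x in M. 0 \<le> x"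
  shows "M \<bind> poisson_law = M \<bind> (\<lambda>x. poisson_law (max x 0))"
proof -
  have "M \<bind> poisson_law = M \<bind> (\<lambda>x. poisson_law x \<bind> return (count_space UNIV))"
    by (intro bind_cong refl) (simp add: bind_return'')
  also have "\<dots> = M \<bind> (\<lambda>x. poisson_law (max x 0) \<bind> return (count_space UNIV))"
    using assms by (intro bind_poisson_law_max) (auto simp: prob_space_return)
  also have "\<dots> = M \<bind> (\<lambda>x. poisson_law (max x 0))"
    by (intro bind_cong refl) (simp add: bind_return'')
  finally show ?thesis .
qed

lemma bind_poisson_law_assoc:
  fixes M :: "real measure" and Q :: "nat \<Rightarrow> 'b measure"
  assumes M: "sets M = sets borel" "AE x in M. 0 \<le> x"
    and Q: "\<And>n. prob_space (Q n)" "\<And>n. sets (Q n) = sets N"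
  shows "M \<bind> (\<lambda>x. poisson_law x \<bind> Q) = (M \<bind> poisson_law) \<bind> Q"
proof -
  have "Q \<in> count_space UNIV \<rightarrow>\<^sub>M subprob_algebra N"
    using Q by (auto simp: space_subprob_algebra prob_space_imp_subprob_space)
  moreover have "(\<lambda>x. poisson_law (max x 0)) \<in> M \<rightarrow>\<^sub>M subprob_algebra (count_space UNIV)"
    using measurable_poisson_law_max by (simp add: measurable_cong_sets[OF M(1) refl])
  ultimately show ?thesis
    using M Q by (simp add: bind_poisson_law_max bind_poisson_law_eq_max bind_assoc)
qed

lemma gamma_poisson_is_NB:
  assumes k: "0 \<le> k" and \<theta>: "0 < \<theta>"
  shows "is_NB (gamma_law k \<theta> \<bind> poisson_law) (\<theta> / (1 + \<theta>)) k"
proof -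
  have P_kernel: "(\<lambda>x. poisson_law (max x 0)) \<in> gamma_law k \<theta> \<rightarrow>\<^sub>M subprob_algebra (count_space UNIV)"
    using measurable_poisson_law_max by (simp add: measurable_cong_sets[OF sets_gamma_law refl])
  show ?thesis
    unfolding is_NB_def bind_poisson_law_eq_max[OF sets_gamma_law AE_gamma_law_nonneg]
  proof (rule law_with_pgfI)
    show "prob_space (gamma_law k \<theta> \<bind> (\<lambda>x. poisson_law (max x 0)))"
      using k \<theta> P_kernel
      by (intro prob_space.prob_space_bind prob_space_gamma_law AE_I2 prob_space_poisson_law) auto
    show "sets (gamma_law k \<theta> \<bind> (\<lambda>x. poisson_law (max x 0))) = sets (count_space UNIV)"
      by (intro sets_bind) auto
  next
    fix u :: real assume u: "0 \<le> u" "u \<le> 1"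
    have "(\<integral>\<^sup>+m. ennreal (u ^ m) \<partial>(gamma_law k \<theta> \<bind> (\<lambda>x. poisson_law (max x 0))))
        = (\<integral>\<^sup>+x. ennreal (exp (max x 0 * (u - 1))) \<partial>gamma_law k \<theta>)"
      using u by (simp add: nn_integral_bind[OF _ P_kernel] nn_integral_power_poisson_law)
    also have "\<dots> = (\<integral>\<^sup>+x. ennreal (exp (- (1 - u) * x)) \<partial>gamma_law k \<theta>)"
      using AE_gamma_law_nonneg by (rule nn_integral_cong_AE[OF AE_mp]) (auto simp: algebra_simps)
    also have "\<dots> = ennreal ((1 + \<theta> * (1 - u)) powr (- k))"
      using k \<theta> u by (intro nn_integral_exp_gamma_law) auto
    also have "(1 + \<theta> * (1 - u)) powr (- k) = nb_pgf (\<theta> / (1 + \<theta>)) k u"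
    proof -
      have "(1 - \<theta> / (1 + \<theta>)) / (1 - \<theta> / (1 + \<theta>) * u) = inverse (1 + \<theta> * (1 - u))"
        using \<theta> by (simp add: field_simps)
      moreover have "0 < 1 + \<theta> * (1 - u)" using \<theta> u by (simp add: add_pos_nonneg)
      ultimately show ?thesis by (simp add: nb_pgf_def powr_minus inverse_powr)
    qed
    finally show "0 \<le> nb_pgf (\<theta> / (1 + \<theta>)) k u \<and>
        (\<integral>\<^sup>+m. ennreal (u ^ m) \<partial>(gamma_law k \<theta> \<bind> (\<lambda>x. poisson_law (max x 0))))
        = ennreal (nb_pgf (\<theta> / (1 + \<theta>)) k u)"
      by (simp add: nb_pgf_def)
  qed
qed

lemma gamma_poisson_hierarchy_is_TDL:
  fixes a b c d :: real
  assumes ha: "a < 0" and hb: "b > 0" and hc: "0 < c" "c < 1" and hd: "d > 0"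
  shows "is_TDL (gamma_law (1 / d) (b * d * (1 - c) powr a) \<bind> (\<lambda>g\<^sub>1.
              poisson_law g\<^sub>1 \<bind> (\<lambda>n.
              gamma_law (- a * real n) (c / (1 - c)) \<bind> (\<lambda>g\<^sub>2.
              poisson_law g\<^sub>2)))) a b c d"
proof -
  define B where "B = b * d * (1 - c) powr a"
  define Q where "Q = (\<lambda>n. gamma_law (- a * real n) (c / (1 - c)) \<bind> poisson_law)"
  have "0 < B" using hb hc hd by (simp add: B_def)
  have c_eq: "c / (1 - c) / (1 + c / (1 - c)) = c" using hc by (simp add: field_simps)
  have "is_NB (Q n) c (- a * real n)" for n
    using gamma_poisson_is_NB[of "- a * real n" "c / (1 - c)", unfolded c_eq] ha hc
    by (simp add: Q_def mult_nonpos_nonneg)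
  then have Q_law: "law_with_pgf (Q n) (\<lambda>s. nb_pgf c (- a) s ^ n)" for n
    using hc by (subst law_with_pgf_cong[OF nb_pgf_mult_shape[symmetric]]) (auto simp: is_NB_def)
  have "law_with_pgf ((gamma_law (1 / d) B \<bind> poisson_law) \<bind> Q)
      (nb_pgf (B / (1 + B)) (1 / d) \<circ> nb_pgf c (- a))"
    using gamma_poisson_is_NB[of "1 / d" B] hd \<open>0 < B\<close> ha hc Q_law
    by (intro law_with_pgf_bind) (auto simp: is_NB_def nb_pgf_bounds)
  moreover have "gamma_law (1 / d) B \<bind> (\<lambda>g. poisson_law g \<bind> Q) = (gamma_law (1 / d) B \<bind> poisson_law) \<bind> Q"
    using Q_law by (intro bind_poisson_law_assoc AE_gamma_law_nonneg) (auto simp: law_with_pgf_def)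
  ultimately show ?thesis
    using is_TDL_iff_nb_compound[OF ha hb hc hd] by (simp add: B_def Q_def)
qed

theorem mainTheorem11:
  fixes a b c d :: real
  assumes ha: "a < 0" and hb: "b > 0" and hc: "0 < c" "c < 1" and hd: "d > 0"
  defines "\<pi>\<^sub>0 \<equiv> b * d * (1 - c) powr a / (1 + b * d * (1 - c) powr a)"
  shows
    "(\<forall>(M :: 'a measure) (Z :: 'a \<Rightarrow> nat) (W :: nat \<Rightarrow> 'a \<Rightarrow> nat).
        prob_space M \<longrightarrow>
        prob_space.indep_vars M (\<lambda>_. count_space UNIV)
          (\<lambda>i. case i of None \<Rightarrow> Z | Some j \<Rightarrow> W j) (insert None (Some ` {1..})) \<longrightarrow>
        is_NB (distr M (count_space UNIV) Z) \<pi>\<^sub>0 (1 / d) \<longrightarrow>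
        (\<forall>i\<ge>1. is_NB (distr M (count_space UNIV) (W i)) c (- a)) \<longrightarrow>
        is_TDL (distr M (count_space UNIV) (\<lambda>\<omega>. \<Sum>i = 1..Z \<omega>. W i \<omega>)) a b c d)
   \<and>
    (\<forall>(pZ :: nat pmf) (K :: nat \<Rightarrow> nat pmf).
        is_NB (measure_pmf pZ) \<pi>\<^sub>0 (1 / d) \<longrightarrow>
        K 0 = return_pmf 0 \<longrightarrow>
        (\<forall>z>0. is_NB (measure_pmf (K z)) c (- a * real z)) \<longrightarrow>
        is_TDL (measure_pmf (bind_pmf pZ K)) a b c d)
   \<and>
    is_TDL (gamma_law (1 / d) (b * d * (1 - c) powr a) \<bind> (\<lambda>g\<^sub>1.
              poisson_law g\<^sub>1 \<bind> (\<lambda>n.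
              gamma_law (- a * real n) (c / (1 - c)) \<bind> (\<lambda>g\<^sub>2.
              poisson_law g\<^sub>2)))) a b c d"
  unfolding \<pi>\<^sub>0_def
  using random_sum_is_TDL[OF ha hb hc hd] nb_mixture_is_TDL[OF ha hb hc hd]
    gamma_poisson_hierarchy_is_TDL[OF ha hb hc hd]
  by blast

end
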